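(* Let $f^*:[0,1]\to\mathbb{R}$ be $L$-Lipschitz, let $\mu_i=f^*(i/n)$ for $1\le i\le n$, let $\pi^*$ be a permutation of $[n]=\{1,\dots,n\}$, $\sigma_*>0$, and suppose $$y_i=\mu_{\pi^*(i)}+\sigma_*\epsilon_i,\qquad 1\le i\le n,$$ with $\epsilon_1,\dots,\epsilon_n$ i.i.d. $N(0,1)$. Let $r=\max_{1\le i\le n}|\pi^*(i)-i|$ and let $M\in\mathbb{R}^{n\times n}$ have entries $M_{ij}=\mathbb{I}(|i-j|\le r)$. Let $\widehat{\pi}$ (with permutation matrix $\widehat{\Pi}$) be the MAP estimator of $\pi^*$ under the prior $p(\pi)\propto\exp(\gamma\,\mathrm{tr}(\Pi^\top M))$, i.e., a minimizer over permutations $\pi$ of $[n]$ of $$\frac{1}{2\sigma_*^2}\sum_{i=1}^n\big(y_i-\mu_{\pi(i)}\big)^2-\gamma\,\mathrm{tr}(\Pi^\top M).$$ If $\gamma>\frac{2L}{\sigma_*}\big(\sqrt{\log n}+\sqrt{2}\,r\big)$, then with probability at least $1-\exp(-(\sqrt2-1)^2/2)-2/n$, the estimator satisfies $|\widehat{\pi}(i)-i|\le r$ for all $1\le i\le n$; moreover, on the same event, $\max_{1\le i\le n}|\mu_{\widehat{\pi}(i)}-\mu_{\pi^*(i)}|\le 2L\, r/n$.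
   Context: For a permutation $\pi$ of $[n]$, its permutation matrix $\Pi=(\pi_{ij})$ has $\pi_{ij}=1$ if $\pi(i)=j$ and $0$ otherwise; thus $\mathrm{tr}(\Pi^\top M)=\sum_{i}M_{i\pi(i)}$, which here equals the number of indices $i$ with $|\pi(i)-i|\le r$. $\mathbb{I}$ denotes the indicator function. *)

theory Defs
  imports "HOL-Probability.Probability"
begin

definition mu :: "(real \<Rightarrow> real) \<Rightarrow> nat \<Rightarrow> nat \<Rightarrow> real" where
  "mu f n i = f (real i / real n)"

definition bandM :: "nat \<Rightarrow> nat \<Rightarrow> nat \<Rightarrow> real" where
  "bandM r i j = (if \<bar>int i - int j\<bar> \<le> int r then 1 else 0)"

text \<open>tr(Pi^T M) = sum_i M_{i, pi(i)}\<close>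
definition trPM :: "nat \<Rightarrow> (nat \<Rightarrow> nat \<Rightarrow> real) \<Rightarrow> (nat \<Rightarrow> nat) \<Rightarrow> real" where
  "trPM n M p = (\<Sum>i\<in>{1..n}. M i (p i))"

definition max_disp :: "nat \<Rightarrow> (nat \<Rightarrow> nat) \<Rightarrow> nat" where
  "max_disp n p = Max ((\<lambda>i. nat \<bar>int (p i) - int i\<bar>) ` {1..n})"

definition map_obj :: "(real \<Rightarrow> real) \<Rightarrow> nat \<Rightarrow> real \<Rightarrow> real \<Rightarrow> (nat \<Rightarrow> nat \<Rightarrow> real)
    \<Rightarrow> (nat \<Rightarrow> real) \<Rightarrow> (nat \<Rightarrow> nat) \<Rightarrow> real" where
  "map_obj f n \<sigma> \<gamma> M y p =
     1 / (2 * \<sigma>^2) * (\<Sum>i\<in>{1..n}. (y i - mu f n (p i))^2) - \<gamma> * trPM n M p"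

definition is_MAP :: "(real \<Rightarrow> real) \<Rightarrow> nat \<Rightarrow> real \<Rightarrow> real \<Rightarrow> (nat \<Rightarrow> nat \<Rightarrow> real)
    \<Rightarrow> (nat \<Rightarrow> real) \<Rightarrow> (nat \<Rightarrow> nat) \<Rightarrow> bool" where
  "is_MAP f n \<sigma> \<gamma> M y p \<longleftrightarrow> p permutes {1..n} \<and>
     (\<forall>q. q permutes {1..n} \<longrightarrow> map_obj f n \<sigma> \<gamma> M y p \<le> map_obj f n \<sigma> \<gamma> M y q)"

definition noise :: "nat \<Rightarrow> (nat \<Rightarrow> real) measure" where
  "noise n = PiM {1..n} (\<lambda>_. density lborel std_normal_density)"

end

theory Submission
  imports Defs
begin

(* Let k be the number of indices that a MAP estimate pi moves by more than r. Comparing its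
   objective with that of pi*, whose trace term is n, gives
   gamma k <= (1/sigma) sum_i |eps_i| |mu_(pi*(i)) - mu_(pi(i))|.
   On the event that max_i |eps_i| <= 2 sqrt(log n) and sum_i eps_i^2 <= 2n, Lipschitz continuity
   bounds the right-hand side by (2 L sqrt(log n) k + 2 sqrt 2 L r) / sigma, which is smaller than
   gamma k unless k = 0. Then |pi(i) - pi*(i)| <= 2r for all i, which gives the bound on mu.
   Gaussian tails and a union bound exclude the first condition with probability at most 2/n;
   for the second, Markov's inequality already gives failure probability at most 1/2, and
   1/2 <= exp(-(sqrt 2 - 1)^2 / 2). *)

section \<open>Deterministic analysis of the MAP estimator\<close>

lemma abs_mu_diff_le:
  assumes lip: "L-lipschitz_on {0..1} f"
    and j: "j \<in> {1..n}" and k: "k \<in> {1..n}" and jk: "\<bar>int j - int k\<bar> \<le> int m"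
  shows "\<bar>mu f n j - mu f n k\<bar> \<le> L * real m / real n"
proof -
  have n: "real n > 0" using j by simp
  have "real j / real n \<in> {0..1}" "real k / real n \<in> {0..1}" using j k by auto
  from lipschitz_onD[OF lip this]
  have "\<bar>mu f n j - mu f n k\<bar> \<le> L * \<bar>real j / real n - real k / real n\<bar>"
    by (simp add: mu_def dist_real_def)
  also have "\<dots> = L * \<bar>real j - real k\<bar> / real n"
    using n by (simp add: diff_divide_distrib[symmetric])
  also have "\<dots> \<le> L * real m / real n"
    using jk lipschitz_on_nonneg[OF lip] n
    by (intro divide_right_mono mult_left_mono) linarith+
  finally show ?thesis .
qed

lemma abs_disp_le_max_disp:
  "i \<in> {1..n} \<Longrightarrow> \<bar>int (p i) - int i\<bar> \<le> int (max_disp n p)"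
  unfolding max_disp_def by (subst nat_le_iff[symmetric]) (intro Max_ge; auto)

lemma trPM_bandM:
  "trPM n (bandM r) p = real n - real (card {i\<in>{1..n}. int r < \<bar>int (p i) - int i\<bar>})"
proof -
  let ?near = "{i\<in>{1..n}. \<bar>int (p i) - int i\<bar> \<le> int r}"
  let ?far = "{i\<in>{1..n}. int r < \<bar>int (p i) - int i\<bar>}"
  have "trPM n (bandM r) p = real (card ?near)"
    unfolding trPM_def bandM_def
    by (simp add: sum.If_cases abs_minus_commute Int_def conj_commute)
  moreover have "card ?near + card ?far = n"
  proof -
    have "?near \<union> ?far = {1..n}" "?near \<inter> ?far = {}" by auto
    then show ?thesis using card_Un_disjoint[of ?near ?far] by simp
  qed
  ultimately show ?thesis by simp
qed

lemma sum_square_diff_le: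
  fixes a d :: "'i \<Rightarrow> real"
  shows "(\<Sum>i\<in>A. (a i)\<^sup>2) - (\<Sum>i\<in>A. (a i + d i)\<^sup>2) \<le> 2 * (\<Sum>i\<in>A. \<bar>a i\<bar> * \<bar>d i\<bar>)"
proof -
  have "(a i)\<^sup>2 - (a i + d i)\<^sup>2 \<le> 2 * (\<bar>a i\<bar> * \<bar>d i\<bar>)" for i
  proof -
    have "(a i)\<^sup>2 - (a i + d i)\<^sup>2 = - 2 * (a i * d i) - (d i)\<^sup>2"
      by (simp add: power2_eq_square algebra_simps)
    moreover have "- (a i * d i) \<le> \<bar>a i\<bar> * \<bar>d i\<bar>"
      by (metis abs_ge_minus_self abs_mult)
    ultimately show ?thesis by (smt (verit) zero_le_power2)
  qed
  then show ?thesis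
    by (simp add: sum_subtractf[symmetric] sum_distrib_left sum_mono)
qed

lemma sum_abs_le_of_sum_squares_le:
  fixes x :: "'i \<Rightarrow> real" and c :: real
  assumes c: "c > 0" and sq: "(\<Sum>i\<in>A. (x i)\<^sup>2) \<le> c\<^sup>2 * real (card A)"
  shows "(\<Sum>i\<in>A. \<bar>x i\<bar>) \<le> c * real (card A)"
proof -
  have amgm: "\<bar>x i\<bar> \<le> (c + (x i)\<^sup>2 / c) / 2" for i
  proof -
    have "0 \<le> (\<bar>x i\<bar> - c)\<^sup>2" by simp
    then have "2 * c * \<bar>x i\<bar> \<le> (x i)\<^sup>2 + c\<^sup>2"
      by (simp add: power2_eq_square algebra_simps)
    then show ?thesis using c by (simp add: field_simps power2_eq_square)
  qed
  have "(\<Sum>i\<in>A. \<bar>x i\<bar>) \<le> (\<Sum>i\<in>A. (c + (x i)\<^sup>2 / c) / 2)"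
    by (intro sum_mono amgm)
  also have "\<dots> = (c * card A + (\<Sum>i\<in>A. (x i)\<^sup>2) / c) / 2"
    by (simp add: sum.distrib sum_divide_distrib[symmetric])
  also have "\<dots> \<le> (c * card A + c\<^sup>2 * card A / c) / 2"
    using sq c by (intro divide_right_mono add_left_mono) auto
  also have "\<dots> = c * card A"
    using c by (simp add: power2_eq_square)
  finally show ?thesis .
qed

lemma MAP_far_card_le:
  assumes \<sigma>: "\<sigma> > 0"
    and ps: "ps permutes {1..n}" and ps_band: "\<forall>i\<in>{1..n}. \<bar>int (ps i) - int i\<bar> \<le> int r"
    and MAP: "is_MAP f n \<sigma> \<gamma> (bandM r) (\<lambda>i. mu f n (ps i) + \<sigma> * \<epsilon> i) ph"
  shows "\<gamma> * card {i\<in>{1..n}. int r < \<bar>int (ph i) - int i\<bar>}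
           \<le> (\<Sum>i\<in>{1..n}. \<bar>\<epsilon> i\<bar> * \<bar>mu f n (ps i) - mu f n (ph i)\<bar>) / \<sigma>"
proof -
  define k where "k = card {i\<in>{1..n}. int r < \<bar>int (ph i) - int i\<bar>}"
  define d where "d i = mu f n (ps i) - mu f n (ph i)" for i
  define y where "y i = mu f n (ps i) + \<sigma> * \<epsilon> i" for i
  have opt: "map_obj f n \<sigma> \<gamma> (bandM r) y ph \<le> map_obj f n \<sigma> \<gamma> (bandM r) y ps"
    using MAP ps unfolding is_MAP_def y_def by blast
  have "map_obj f n \<sigma> \<gamma> (bandM r) y ps = (\<Sum>i\<in>{1..n}. (\<sigma> * \<epsilon> i)\<^sup>2) / (2 * \<sigma>\<^sup>2) - \<gamma> * n"
    using ps_band by (simp add: map_obj_def trPM_bandM not_less y_def)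
  moreover have "map_obj f n \<sigma> \<gamma> (bandM r) y ph
      = (\<Sum>i\<in>{1..n}. (\<sigma> * \<epsilon> i + d i)\<^sup>2) / (2 * \<sigma>\<^sup>2) - \<gamma> * (real n - real k)"
    by (simp add: map_obj_def trPM_bandM k_def y_def d_def algebra_simps)
  ultimately have "\<gamma> * k \<le> ((\<Sum>i\<in>{1..n}. (\<sigma> * \<epsilon> i)\<^sup>2) - (\<Sum>i\<in>{1..n}. (\<sigma> * \<epsilon> i + d i)\<^sup>2)) / (2 * \<sigma>\<^sup>2)"
    using opt unfolding diff_divide_distrib by (simp add: algebra_simps)
  also have "\<dots> \<le> 2 * (\<Sum>i\<in>{1..n}. \<bar>\<sigma> * \<epsilon> i\<bar> * \<bar>d i\<bar>) / (2 * \<sigma>\<^sup>2)"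
    by (intro divide_right_mono sum_square_diff_le) simp
  also have "\<dots> = (\<Sum>i\<in>{1..n}. \<bar>\<epsilon> i\<bar> * \<bar>d i\<bar>) / \<sigma>"
    using \<sigma> by (simp add: abs_mult sum_distrib_left[symmetric] mult.assoc power2_eq_square)
  finally show ?thesis unfolding k_def d_def .
qed

lemma sum_abs_noise_mu_diff_le:
  fixes L t :: real and r :: nat
  assumes lip: "L-lipschitz_on {0..1} f"
    and ps: "ps permutes {1..n}" and ph: "ph permutes {1..n}"
    and ps_band: "\<forall>i\<in>{1..n}. \<bar>int (ps i) - int i\<bar> \<le> int r"
    and \<epsilon>_max: "\<forall>i\<in>{1..n}. \<bar>\<epsilon> i\<bar> \<le> t"
    and \<epsilon>_sq: "(\<Sum>i\<in>{1..n}. (\<epsilon> i)\<^sup>2) \<le> 2 * real n"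
  shows "(\<Sum>i\<in>{1..n}. \<bar>\<epsilon> i\<bar> * \<bar>mu f n (ps i) - mu f n (ph i)\<bar>)
           \<le> card {i\<in>{1..n}. int r < \<bar>int (ph i) - int i\<bar>} * (L * t) + sqrt 2 * (2 * L * r)"
proof -
  define far where "far = {i\<in>{1..n}. int r < \<bar>int (ph i) - int i\<bar>}"
  have L: "L \<ge> 0" using lipschitz_on_nonneg[OF lip] .
  have far_sub: "far \<subseteq> {1..n}" unfolding far_def by blast
  have term_le: "\<bar>\<epsilon> i\<bar> * \<bar>mu f n (ps i) - mu f n (ph i)\<bar>
      \<le> (if i \<in> far then L * t else 0) + 2 * L * r / n * \<bar>\<epsilon> i\<bar>" if i: "i \<in> {1..n}" for i
  proof -
    have ps_i: "ps i \<in> {1..n}" and ph_i: "ph i \<in> {1..n}"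
      using i permutes_in_image[OF ps] permutes_in_image[OF ph] by auto
    show ?thesis
    proof (cases "i \<in> far")
      case True
      have "\<bar>mu f n (ps i) - mu f n (ph i)\<bar> \<le> L * real n / real n"
        using ps_i ph_i by (intro abs_mu_diff_le[OF lip]) auto
      then have "\<bar>\<epsilon> i\<bar> * \<bar>mu f n (ps i) - mu f n (ph i)\<bar> \<le> t * L"
        using \<epsilon>_max i L by (intro mult_mono) auto
      moreover have "0 \<le> 2 * L * r / n * \<bar>\<epsilon> i\<bar>" using L by simp
      ultimately show ?thesis using True by (simp add: mult.commute)
    next
      case False
      then have "\<bar>int (ps i) - int (ph i)\<bar> \<le> int (2 * r)"
        using i ps_band unfolding far_def by fastforce
      then have "\<bar>mu f n (ps i) - mu f n (ph i)\<bar> \<le> L * real (2 * r) / real n"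
        using ps_i ph_i by (intro abs_mu_diff_le[OF lip])
      then have "\<bar>mu f n (ps i) - mu f n (ph i)\<bar> \<le> 2 * L * r / n"
        by (simp add: ac_simps)
      then have "\<bar>\<epsilon> i\<bar> * \<bar>mu f n (ps i) - mu f n (ph i)\<bar> \<le> \<bar>\<epsilon> i\<bar> * (2 * L * r / n)"
        by (intro mult_left_mono) auto
      with False show ?thesis by (simp add: mult.commute)
    qed
  qed
  have "(\<Sum>i\<in>{1..n}. \<bar>\<epsilon> i\<bar> * \<bar>mu f n (ps i) - mu f n (ph i)\<bar>)
      \<le> (\<Sum>i\<in>{1..n}. (if i \<in> far then L * t else 0) + 2 * L * r / n * \<bar>\<epsilon> i\<bar>)"
    by (intro sum_mono term_le)
  also have "\<dots> = card far * (L * t) + 2 * L * r / n * (\<Sum>i\<in>{1..n}. \<bar>\<epsilon> i\<bar>)"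
    using far_sub by (simp add: sum.distrib sum_distrib_left sum.If_cases Int_absorb1)
  also have "\<dots> \<le> card far * (L * t) + 2 * L * r / n * (sqrt 2 * n)"
    using \<epsilon>_sq L sum_abs_le_of_sum_squares_le[where c = "sqrt 2" and A = "{1..n}" and x = \<epsilon>]
    by (intro add_left_mono mult_left_mono) auto
  also have "\<dots> \<le> card far * (L * t) + sqrt 2 * (2 * L * r)"
    using L by (cases "n = 0") simp_all
  finally show ?thesis unfolding far_def .
qed

lemma MAP_within_band:
  fixes L :: real
  assumes lip: "L-lipschitz_on {0..1} f"
    and ps: "ps permutes {1..n}"
    and \<sigma>: "\<sigma> > 0"
    and \<gamma>: "\<gamma> > 2 * L / \<sigma> * (sqrt (ln (real n)) + sqrt 2 * real (max_disp n ps))"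
    and \<epsilon>_max: "\<forall>i\<in>{1..n}. \<bar>\<epsilon> i\<bar> \<le> 2 * sqrt (ln (real n))"
    and \<epsilon>_sq: "(\<Sum>i\<in>{1..n}. (\<epsilon> i)\<^sup>2) \<le> 2 * real n"
    and MAP: "is_MAP f n \<sigma> \<gamma> (bandM (max_disp n ps)) (\<lambda>i. mu f n (ps i) + \<sigma> * \<epsilon> i) ph"
  shows "\<forall>i\<in>{1..n}. \<bar>int (ph i) - int i\<bar> \<le> int (max_disp n ps)"
proof (rule ccontr)
  define r where "r = max_disp n ps"
  define k where "k = card {i\<in>{1..n}. int r < \<bar>int (ph i) - int i\<bar>}"
  assume "\<not> ?thesis"
  then have "{i\<in>{1..n}. int r < \<bar>int (ph i) - int i\<bar>} \<noteq> {}"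
    unfolding r_def by force
  then have k: "real k \<ge> 1"
    unfolding k_def by (simp add: Suc_le_eq card_gt_0_iff)
  have ps_band: "\<forall>i\<in>{1..n}. \<bar>int (ps i) - int i\<bar> \<le> int r"
    unfolding r_def by (auto intro: abs_disp_le_max_disp)
  have ph: "ph permutes {1..n}" using MAP unfolding is_MAP_def by blast
  have L: "L \<ge> 0" using lipschitz_on_nonneg[OF lip] .
  have "\<gamma> * k \<le> (\<Sum>i\<in>{1..n}. \<bar>\<epsilon> i\<bar> * \<bar>mu f n (ps i) - mu f n (ph i)\<bar>) / \<sigma>"
    using MAP_far_card_le[OF \<sigma> ps ps_band] MAP unfolding k_def r_def by blast
  also have "\<dots> \<le> (k * (L * (2 * sqrt (ln n))) + sqrt 2 * (2 * L * r)) / \<sigma>"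
    using sum_abs_noise_mu_diff_le[OF lip ps ph ps_band \<epsilon>_max \<epsilon>_sq] \<sigma>
    unfolding k_def by (intro divide_right_mono) auto
  also have "\<dots> \<le> k * (2 * L * (sqrt (ln n) + sqrt 2 * r)) / \<sigma>"
  proof (rule divide_right_mono)
    have "0 \<le> sqrt 2 * (2 * L * r)" using L by simp
    from mult_right_mono[OF k this]
    show "k * (L * (2 * sqrt (ln n))) + sqrt 2 * (2 * L * r) \<le> k * (2 * L * (sqrt (ln n) + sqrt 2 * r))"
      by (simp add: algebra_simps)
  qed (use \<sigma> in simp)
  also have "\<dots> = k * (2 * L / \<sigma> * (sqrt (ln n) + sqrt 2 * r))"
    by simp
  also have "\<dots> < k * \<gamma>"
    using \<gamma> k unfolding r_def by (intro mult_strict_left_mono) auto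
  finally show False by simp
qed

lemma Max_abs_mu_diff_le:
  fixes L :: real
  assumes lip: "L-lipschitz_on {0..1} f" and n: "n \<ge> 1"
    and ph: "ph permutes {1..n}" and ps: "ps permutes {1..n}"
    and ph_band: "\<forall>i\<in>{1..n}. \<bar>int (ph i) - int i\<bar> \<le> int r"
    and ps_band: "\<forall>i\<in>{1..n}. \<bar>int (ps i) - int i\<bar> \<le> int r"
  shows "Max ((\<lambda>i. \<bar>mu f n (ph i) - mu f n (ps i)\<bar>) ` {1..n}) \<le> 2 * L * real r / real n"
proof (subst Max_le_iff, safe)
  fix i assume i: "i \<in> {1..n}"
  have "\<bar>int (ph i) - int (ps i)\<bar> \<le> int (2 * r)"
    using i ph_band ps_band by fastforce
  then have "\<bar>mu f n (ph i) - mu f n (ps i)\<bar> \<le> L * real (2 * r) / real n"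
    using i permutes_in_image[OF ph] permutes_in_image[OF ps] by (intro abs_mu_diff_le[OF lip]) auto
  then show "\<bar>mu f n (ph i) - mu f n (ps i)\<bar> \<le> 2 * L * real r / real n"
    by (simp add: ac_simps)
qed (use n in auto)

lemma MAP_error_bounds:
  assumes lip: "L-lipschitz_on {0..1} f" and n: "n \<ge> 1"
    and ps: "ps permutes {1..n}"
    and \<sigma>: "\<sigma> > 0"
    and \<gamma>: "\<gamma> > 2 * L / \<sigma> * (sqrt (ln (real n)) + sqrt 2 * real (max_disp n ps))"
    and \<epsilon>_max: "\<forall>i\<in>{1..n}. \<bar>\<epsilon> i\<bar> \<le> 2 * sqrt (ln (real n))"
    and \<epsilon>_sq: "(\<Sum>i\<in>{1..n}. (\<epsilon> i)\<^sup>2) \<le> 2 * real n"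
    and MAP: "is_MAP f n \<sigma> \<gamma> (bandM (max_disp n ps)) (\<lambda>i. mu f n (ps i) + \<sigma> * \<epsilon> i) ph"
  shows "(\<forall>i\<in>{1..n}. \<bar>int (ph i) - int i\<bar> \<le> int (max_disp n ps)) \<and>
         Max ((\<lambda>i. \<bar>mu f n (ph i) - mu f n (ps i)\<bar>) ` {1..n})
           \<le> 2 * L * real (max_disp n ps) / real n"
proof
  show ph_band: "\<forall>i\<in>{1..n}. \<bar>int (ph i) - int i\<bar> \<le> int (max_disp n ps)"
    using MAP_within_band[OF lip ps \<sigma> \<gamma> \<epsilon>_max \<epsilon>_sq MAP] .
  have ph: "ph permutes {1..n}" using MAP unfolding is_MAP_def by blast
  show "Max ((\<lambda>i. \<bar>mu f n (ph i) - mu f n (ps i)\<bar>) ` {1..n}) \<le> 2 * L * real (max_disp n ps) / real n"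
    using abs_disp_le_max_disp by (intro Max_abs_mu_diff_le[OF lip n ph ps ph_band]) blast
qed

section \<open>Gaussian noise\<close>

abbreviation std_normal :: "real measure" where
  "std_normal \<equiv> density lborel std_normal_density"

lemma prob_space_std_normal: "prob_space std_normal"
  by (rule prob_space_normal_density) simp

lemma std_normal_density_mult_exp:
  "std_normal_density x * exp (t * x) = exp (t\<^sup>2 / 2) * normal_density t 1 x"
proof -
  have "- x\<^sup>2 / 2 + t * x = t\<^sup>2 / 2 + - (x - t)\<^sup>2 / (2 * 1\<^sup>2)"
    by (simp add: power2_eq_square field_simps)
  then show ?thesis
    unfolding std_normal_density_def normal_density_def by (simp add: exp_add[symmetric])
qed

lemma integrable_std_normal_exp: "integrable std_normal (\<lambda>x. exp (t * x))"
  by (subst integrable_density) (auto simp: std_normal_density_mult_exp)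

lemma integral_std_normal_exp: "(\<integral>x. exp (t * x) \<partial>std_normal) = exp (t\<^sup>2 / 2)"
  by (subst integral_density) (auto simp: std_normal_density_mult_exp)

lemma std_normal_abs_tail:
  assumes t: "t \<ge> 0"
  shows "measure std_normal {x \<in> space std_normal. t \<le> \<bar>x\<bar>} \<le> 2 * exp (- (t\<^sup>2 / 2))"
proof -
  interpret prob_space std_normal by (rule prob_space_std_normal)
  \<comment> \<open>Chernoff bound with the moment generating function of \<open>\<bar>x\<bar>\<close> replaced by \<open>2 cosh (t x)\<close>\<close>
  define u where "u x = exp (t * x) + exp ((- t) * x)" for x
  have u_int: "integrable std_normal u"
    unfolding u_def by (intro Bochner_Integration.integrable_add integrable_std_normal_exp)
  have "measure std_normal {x \<in> space std_normal. t \<le> \<bar>x\<bar>}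
      \<le> measure std_normal {x \<in> space std_normal. exp (t * t) \<le> u x}"
  proof (rule finite_measure_mono)
    show "{x \<in> space std_normal. exp (t * t) \<le> u x} \<in> sets std_normal"
      unfolding u_def by measurable
    have "exp (t * t) \<le> exp (t * \<bar>x\<bar>)" if "t \<le> \<bar>x\<bar>" for x
      using that t by (simp add: mult_left_mono)
    moreover have "exp (t * \<bar>x\<bar>) \<le> u x" for x
      unfolding u_def by (cases "x \<ge> 0") (auto simp: add_increasing add_increasing2)
    ultimately show "{x \<in> space std_normal. t \<le> \<bar>x\<bar>} \<subseteq> {x \<in> space std_normal. exp (t * t) \<le> u x}"
      by (auto intro: order.trans)
  qed
  also have "\<dots> \<le> (\<integral>x. u x \<partial>std_normal) / exp (t * t)"
    by (rule integral_Markov_inequality_measure[OF u_int, where A = "space std_normal"])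
      (auto simp: u_def)
  also have "(\<integral>x. u x \<partial>std_normal) = 2 * exp (t\<^sup>2 / 2)"
    unfolding u_def
    by (subst Bochner_Integration.integral_add) (simp_all only: integrable_std_normal_exp
        integral_std_normal_exp power2_minus mult_2)
  also have "2 * exp (t\<^sup>2 / 2) / exp (t * t) = 2 * exp (t\<^sup>2 / 2 - t * t)"
    by (simp add: exp_diff)
  also have "t\<^sup>2 / 2 - t * t = - (t\<^sup>2 / 2)"
    by (simp add: power2_eq_square)
  finally show ?thesis .
qed

lemma
  shows integrable_std_normal_square: "integrable std_normal (\<lambda>x. x\<^sup>2)"
    and integral_std_normal_square: "(\<integral>x. x\<^sup>2 \<partial>std_normal) = 1"
proof -
  show "integrable std_normal (\<lambda>x. x\<^sup>2)"
    by (subst integrable_density) (auto intro: integrable_std_normal_moment)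
  have "(\<integral>x. x\<^sup>2 \<partial>std_normal) = (\<integral>x. std_normal_density x * x ^ (2 * 1) \<partial>lborel)"
    by (subst integral_density) auto
  also have "\<dots> = 1"
    by (subst integral_std_normal_moment_even) simp
  finally show "(\<integral>x. x\<^sup>2 \<partial>std_normal) = 1" .
qed

lemma prob_space_noise: "prob_space (noise n)"
  unfolding noise_def by (intro prob_space_PiM prob_space_std_normal)

lemma noise_component_measurable_std_normal:
  "i \<in> {1..n} \<Longrightarrow> (\<lambda>\<epsilon>. \<epsilon> i) \<in> measurable (noise n) std_normal"
  unfolding noise_def by (rule measurable_component_singleton)

lemma noise_component_measurable[measurable]:
  "i \<in> {1..n} \<Longrightarrow> (\<lambda>\<epsilon>. \<epsilon> i) \<in> borel_measurable (noise n)"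
  using noise_component_measurable_std_normal measurable_cong_sets[of _ _ std_normal borel]
  by simp

lemma distr_noise_component:
  "i \<in> {1..n} \<Longrightarrow> distr (noise n) std_normal (\<lambda>\<epsilon>. \<epsilon> i) = std_normal"
  unfolding noise_def by (rule distr_PiM_component) (auto intro: prob_space_std_normal)

lemma noise_component_abs_tail:
  assumes i: "i \<in> {1..n}" and t: "t \<ge> 0"
  shows "measure (noise n) {\<epsilon> \<in> space (noise n). t \<le> \<bar>\<epsilon> i\<bar>} \<le> 2 * exp (- (t\<^sup>2 / 2))"
proof -
  have "{\<epsilon> \<in> space (noise n). t \<le> \<bar>\<epsilon> i\<bar>}
      = (\<lambda>\<epsilon>. \<epsilon> i) -` {x \<in> space std_normal. t \<le> \<bar>x\<bar>} \<inter> space (noise n)"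
    by auto
  then have "measure (noise n) {\<epsilon> \<in> space (noise n). t \<le> \<bar>\<epsilon> i\<bar>}
      = measure (distr (noise n) std_normal (\<lambda>\<epsilon>. \<epsilon> i)) {x \<in> space std_normal. t \<le> \<bar>x\<bar>}"
    using noise_component_measurable_std_normal[OF i] by (simp add: measure_distr)
  also have "\<dots> \<le> 2 * exp (- (t\<^sup>2 / 2))"
    using std_normal_abs_tail[OF t] by (simp add: distr_noise_component[OF i])
  finally show ?thesis .
qed

lemma
  assumes i: "i \<in> {1..n}"
  shows integrable_noise_component_square: "integrable (noise n) (\<lambda>\<epsilon>. (\<epsilon> i)\<^sup>2)"
    and integral_noise_component_square: "(\<integral>\<epsilon>. (\<epsilon> i)\<^sup>2 \<partial>noise n) = 1"
  using integrable_distr_eq[OF noise_component_measurable_std_normal[OF i], of "\<lambda>x. x\<^sup>2"]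
    integral_distr[OF noise_component_measurable_std_normal[OF i], of "\<lambda>x. x\<^sup>2"]
    integrable_std_normal_square integral_std_normal_square
  by (simp_all add: distr_noise_component[OF i])

lemma noise_sum_squares_Markov:
  assumes n: "n \<ge> 1"
  shows "measure (noise n) {\<epsilon> \<in> space (noise n). 2 * real n \<le> (\<Sum>i\<in>{1..n}. (\<epsilon> i)\<^sup>2)} \<le> 1 / 2"
proof -
  have int: "integrable (noise n) (\<lambda>\<epsilon>. \<Sum>i\<in>{1..n}. (\<epsilon> i)\<^sup>2)"
    by (intro Bochner_Integration.integrable_sum integrable_noise_component_square)
  have "measure (noise n) {\<epsilon> \<in> space (noise n). 2 * real n \<le> (\<Sum>i\<in>{1..n}. (\<epsilon> i)\<^sup>2)}
      \<le> (\<integral>\<epsilon>. (\<Sum>i\<in>{1..n}. (\<epsilon> i)\<^sup>2) \<partial>noise n) / (2 * real n)"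
    by (rule integral_Markov_inequality_measure[OF int, where A = "space (noise n)"])
      (use n in \<open>auto intro!: AE_I2 sum_nonneg\<close>)
  also have "\<dots> = real n / (2 * real n)"
    by (simp add: integrable_noise_component_square integral_noise_component_square)
  finally show ?thesis using n by simp
qed

lemma noise_max_abs_tail:
  assumes n: "n \<ge> 1"
  shows "measure (noise n) {\<epsilon> \<in> space (noise n). \<exists>i\<in>{1..n}. 2 * sqrt (ln n) \<le> \<bar>\<epsilon> i\<bar>} \<le> 2 / n"
proof -
  interpret prob_space "noise n" by (rule prob_space_noise)
  have "{\<epsilon> \<in> space (noise n). \<exists>i\<in>{1..n}. 2 * sqrt (ln n) \<le> \<bar>\<epsilon> i\<bar>}
      = (\<Union>i\<in>{1..n}. {\<epsilon> \<in> space (noise n). 2 * sqrt (ln n) \<le> \<bar>\<epsilon> i\<bar>})"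
    by auto
  also have "measure (noise n) \<dots> \<le> (\<Sum>i\<in>{1..n}. measure (noise n) {\<epsilon> \<in> space (noise n). 2 * sqrt (ln n) \<le> \<bar>\<epsilon> i\<bar>})"
    by (intro measure_UNION_le) (simp_all, measurable)
  also have "\<dots> \<le> (\<Sum>i\<in>{1..n}. 2 * exp (- ((2 * sqrt (ln n))\<^sup>2 / 2)))"
    using n by (intro sum_mono noise_component_abs_tail) auto
  also have "(2 * sqrt (ln n))\<^sup>2 / 2 = ln ((real n)\<^sup>2)"
    using n by (simp add: power_mult_distrib ln_realpow)
  also have "(\<Sum>i\<in>{1..n}. 2 * exp (- ln ((real n)\<^sup>2))) = 2 / n"
    using n by (simp add: exp_minus power2_eq_square field_simps)
  finally show ?thesis .
qed

lemma noise_good_event: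
  assumes n: "n \<ge> 1"
  shows "1 / 2 - 2 / n \<le> measure (noise n) {\<epsilon> \<in> space (noise n).
           (\<forall>i\<in>{1..n}. \<bar>\<epsilon> i\<bar> \<le> 2 * sqrt (ln n)) \<and> (\<Sum>i\<in>{1..n}. (\<epsilon> i)\<^sup>2) \<le> 2 * real n}"
    (is "_ \<le> measure _ ?good")
proof -
  interpret prob_space "noise n" by (rule prob_space_noise)
  define large_max where "large_max = {\<epsilon> \<in> space (noise n). \<exists>i\<in>{1..n}. 2 * sqrt (ln n) \<le> \<bar>\<epsilon> i\<bar>}"
  define large_sum where "large_sum = {\<epsilon> \<in> space (noise n). 2 * real n \<le> (\<Sum>i\<in>{1..n}. (\<epsilon> i)\<^sup>2)}"
  have sets: "large_max \<in> sets (noise n)" "large_sum \<in> sets (noise n)"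
    unfolding large_max_def large_sum_def by measurable
  have "measure (noise n) (large_max \<union> large_sum) \<le> 2 / n + 1 / 2"
    using measure_Un_le[OF sets] noise_max_abs_tail[OF n] noise_sum_squares_Markov[OF n]
    unfolding large_max_def large_sum_def by linarith
  then have "1 / 2 - 2 / n \<le> measure (noise n) (space (noise n) - (large_max \<union> large_sum))"
    using sets by (simp add: prob_compl)
  also have "\<dots> \<le> measure (noise n) ?good"
  proof (rule finite_measure_mono)
    show "space (noise n) - (large_max \<union> large_sum) \<subseteq> ?good"
    proof
      fix \<epsilon> assume "\<epsilon> \<in> space (noise n) - (large_max \<union> large_sum)"
      then have "\<epsilon> \<in> space (noise n)" "\<forall>i\<in>{1..n}. \<bar>\<epsilon> i\<bar> < 2 * sqrt (ln n)"
        "(\<Sum>i\<in>{1..n}. (\<epsilon> i)\<^sup>2) < 2 * real n"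
        by (auto simp: large_max_def large_sum_def not_le)
      then show "\<epsilon> \<in> ?good" by (auto intro: less_imp_le)
    qed
  qed measurable
  finally show ?thesis .
qed

lemma MAP_event_measurable:
  "{\<epsilon> \<in> space (noise n). \<forall>ph. is_MAP f n \<sigma> \<gamma> M (\<lambda>i. y i + \<sigma> * \<epsilon> i) ph \<longrightarrow> C ph}
     \<in> sets (noise n)"
proof -
  define perms where "perms = {p. p permutes {1..n}}"
  define obj where "obj \<epsilon> p = map_obj f n \<sigma> \<gamma> M (\<lambda>i. y i + \<sigma> * \<epsilon> i) p" for \<epsilon> p
  have fin: "finite perms"
    unfolding perms_def by (rule finite_permutations) simp
  have [measurable]: "(\<lambda>\<epsilon>. obj \<epsilon> p) \<in> borel_measurable (noise n)" for p
  proof -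
    have "(\<lambda>\<epsilon>. \<Sum>i\<in>{1..n}. (y i + \<sigma> * \<epsilon> i - mu f n (p i))\<^sup>2) \<in> borel_measurable (noise n)"
    proof (rule borel_measurable_sum)
      fix i :: nat assume [measurable]: "i \<in> {1..n}"
      show "(\<lambda>\<epsilon>. (y i + \<sigma> * \<epsilon> i - mu f n (p i))\<^sup>2) \<in> borel_measurable (noise n)"
        by measurable
    qed
    then show ?thesis
      unfolding obj_def map_obj_def by (intro borel_measurable_diff borel_measurable_times) simp_all
  qed
  have "{\<epsilon> \<in> space (noise n). \<forall>ph\<in>perms. (\<forall>q\<in>perms. obj \<epsilon> ph \<le> obj \<epsilon> q) \<longrightarrow> C ph}
      \<in> sets (noise n)"
    by (intro sets.sets_Collect_finite_All[OF _ fin] sets.sets_Collect_imp sets.sets_Collect_const)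
      measurable
  then show ?thesis
    by (rule back_subst) (auto simp: is_MAP_def perms_def obj_def)
qed

lemma half_le_exp_minus_sqrt2_minus_1: "1 / 2 \<le> exp (- ((sqrt 2 - 1)\<^sup>2 / 2))"
proof -
  have "sqrt 2 - 1 \<le> 1"
    using real_sqrt_le_mono[of 2 4] by simp
  moreover have "sqrt 2 - 1 \<ge> 0" by simp
  ultimately have "(sqrt 2 - 1)\<^sup>2 \<le> 1" by (simp add: power_le_one)
  then show ?thesis
    using exp_ge_add_one_self[of "- ((sqrt 2 - 1)\<^sup>2 / 2)"] by linarith
qed

theorem proposition2:
  fixes f :: "real \<Rightarrow> real" and L \<sigma> \<gamma> :: real and n :: nat and ps :: "nat \<Rightarrow> nat"
  assumes "L-lipschitz_on {0..1} f"
    and "n \<ge> 1"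
    and "ps permutes {1..n}"
    and "\<sigma> > 0"
    and "\<gamma> > 2 * L / \<sigma> * (sqrt (ln (real n)) + sqrt 2 * real (max_disp n ps))"
  shows "measure (noise n)
     {\<epsilon> \<in> space (noise n).
        \<forall>ph. is_MAP f n \<sigma> \<gamma> (bandM (max_disp n ps))
                (\<lambda>i. mu f n (ps i) + \<sigma> * \<epsilon> i) ph \<longrightarrow>
          (\<forall>i\<in>{1..n}. \<bar>int (ph i) - int i\<bar> \<le> int (max_disp n ps)) \<and>
          Max ((\<lambda>i. \<bar>mu f n (ph i) - mu f n (ps i)\<bar>) ` {1..n})
             \<le> 2 * L * real (max_disp n ps) / real n}
   \<ge> 1 - exp (- ((sqrt 2 - 1)^2 / 2)) - 2 / real n"
proof -
  interpret prob_space "noise n" by (rule prob_space_noise)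
  define good where "good = {\<epsilon> \<in> space (noise n).
    (\<forall>i\<in>{1..n}. \<bar>\<epsilon> i\<bar> \<le> 2 * sqrt (ln n)) \<and> (\<Sum>i\<in>{1..n}. (\<epsilon> i)\<^sup>2) \<le> 2 * real n}"
  have "1 - exp (- ((sqrt 2 - 1)^2 / 2)) - 2 / real n \<le> 1 / 2 - 2 / n"
    using half_le_exp_minus_sqrt2_minus_1 by simp
  also have "\<dots> \<le> measure (noise n) good"
    unfolding good_def using noise_good_event[OF assms(2)] .
  finally have bound: "1 - exp (- ((sqrt 2 - 1)^2 / 2)) - 2 / real n \<le> measure (noise n) good" .
  show ?thesis
  proof (rule order_trans[OF bound finite_measure_mono[OF subsetI MAP_event_measurable]])
    fix \<epsilon> assume "\<epsilon> \<in> good"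
    then have \<epsilon>: "\<epsilon> \<in> space (noise n)" "\<forall>i\<in>{1..n}. \<bar>\<epsilon> i\<bar> \<le> 2 * sqrt (ln n)"
      "(\<Sum>i\<in>{1..n}. (\<epsilon> i)\<^sup>2) \<le> 2 * real n"
      unfolding good_def by blast+
    then show "\<epsilon> \<in> {\<epsilon> \<in> space (noise n). \<forall>ph. is_MAP f n \<sigma> \<gamma> (bandM (max_disp n ps))
        (\<lambda>i. mu f n (ps i) + \<sigma> * \<epsilon> i) ph \<longrightarrow>
      (\<forall>i\<in>{1..n}. \<bar>int (ph i) - int i\<bar> \<le> int (max_disp n ps)) \<and>
      Max ((\<lambda>i. \<bar>mu f n (ph i) - mu f n (ps i)\<bar>) ` {1..n}) \<le> 2 * L * real (max_disp n ps) / real n}"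
      using MAP_error_bounds[OF assms \<epsilon>(2,3)] by blast
  qed
qed

end
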